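(* For every integer $n\geq 5$, $AR(n,C_3\cup P_2)=\max\{n+1,\,7\}$, where $C_3\cup P_2$ is the vertex-disjoint union of a triangle and a single edge. *)

theory Defs
  imports Main
begin

definition Kn_edges :: "nat \<Rightarrow> nat set set" where
  "Kn_edges n = {{u, v} | u v. u < n \<and> v < n \<and> u \<noteq> v}"

definition has_rainbow_C3_P2 :: "nat \<Rightarrow> (nat set \<Rightarrow> 'c) \<Rightarrow> bool" where
  "has_rainbow_C3_P2 n c \<longleftrightarrow>
     (\<exists>a b d x y. a < n \<and> b < n \<and> d < n \<and> x < n \<and> y < n \<and>
        distinct [a, b, d, x, y] \<and>
        card (c ` {{a, b}, {b, d}, {a, d}, {x, y}}) = 4)"

definition ar_C3_P2 :: "nat \<Rightarrow> nat" where
  "ar_C3_P2 n = (GREATEST k. \<exists>c :: nat set \<Rightarrow> nat.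
       card (c ` Kn_edges n) = k \<and> \<not> has_rainbow_C3_P2 n c)"

(* AR(n, C3 \<union> P2) = ar(n, C3 \<union> P2) + 1: the minimum number k of colours such that
   every edge-colouring of K_n with at least/exactly k colours contains a rainbow C3 \<union> P2
   (vacuous values of k with no colourings at all are excluded by this formulation). *)
definition AR_C3_P2 :: "nat \<Rightarrow> nat" where
  "AR_C3_P2 n = ar_C3_P2 n + 1"

end

theory Submission
  imports Defs
begin

text \<open>
  Call a colour private to v in S if it occurs on edges of S at v only. If every vertex of a
  set S with at least five vertices has two private colours, a rainbow C3 \<union> P2 can be built
  from them directly. Otherwise some vertex carries at most one private colour, and deleting it
  costs at most one colour; this induction reduces the bound max n 6 on the number of colours
  without a rainbow C3 \<union> P2 to the cases of five and six vertices. Those are settled using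
  Gallai's observation (proved by the same deletion argument) that |S| colours on the edges of
  S force a rainbow triangle, which together with any disjoint edge in a fresh colour is a
  rainbow C3 \<union> P2. The bound is attained by a star colouring, and for n = 5 by a special
  colouring of K5 with six colours.
\<close>

definition edges_on :: "'a set \<Rightarrow> 'a set set" where
  "edges_on S = {{u, v} | u v. u \<in> S \<and> v \<in> S \<and> u \<noteq> v}"

definition colours :: "('a set \<Rightarrow> 'c) \<Rightarrow> 'a set \<Rightarrow> 'c set" where
  "colours c S = c ` edges_on S"

definition private_colours :: "('a set \<Rightarrow> 'c) \<Rightarrow> 'a set \<Rightarrow> 'a \<Rightarrow> 'c set" where
  "private_colours c S v = colours c S - colours c (S - {v})"

definition rainbow_triangle_on :: "('a set \<Rightarrow> 'c) \<Rightarrow> 'a set \<Rightarrow> bool" where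
  "rainbow_triangle_on c S \<longleftrightarrow>
     (\<exists>a b d. {a, b, d} \<subseteq> S \<and> distinct [a, b, d] \<and> distinct [c {a, b}, c {b, d}, c {a, d}])"

definition rainbow_C3_P2_on :: "('a set \<Rightarrow> 'c) \<Rightarrow> 'a set \<Rightarrow> bool" where
  "rainbow_C3_P2_on c S \<longleftrightarrow>
     (\<exists>a b d x y. {a, b, d, x, y} \<subseteq> S \<and> distinct [a, b, d, x, y] \<and>
        distinct [c {a, b}, c {b, d}, c {a, d}, c {x, y}])"

lemma edges_on_eq: "edges_on S = {B. B \<subseteq> S \<and> card B = 2}"
  unfolding edges_on_def by (auto simp: card_2_iff)

lemma card_edges_on: "finite S \<Longrightarrow> card (edges_on S) = card S choose 2"
  by (simp add: edges_on_eq n_subsets)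

lemma finite_edges_on: "finite S \<Longrightarrow> finite (edges_on S)"
  by (simp add: edges_on_eq)

lemma edges_on_mono: "T \<subseteq> S \<Longrightarrow> edges_on T \<subseteq> edges_on S"
  unfolding edges_on_def by blast

lemma card_colours_le_card_edges:
  assumes "finite S"
  shows "card (colours c S) \<le> card S choose 2"
proof -
  have "card (c ` edges_on S) \<le> card (edges_on S)"
    using card_image_le finite_edges_on[OF assms] by blast
  then show ?thesis
    by (simp add: colours_def card_edges_on[OF assms])
qed

lemma colours_mono: "T \<subseteq> S \<Longrightarrow> colours c T \<subseteq> colours c S"
  unfolding colours_def using edges_on_mono by blast

lemma edge_colour_in_colours: "u \<in> S \<Longrightarrow> v \<in> S \<Longrightarrow> u \<noteq> v \<Longrightarrow> c {u, v} \<in> colours c S"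
  unfolding colours_def edges_on_def by blast

lemma coloursE:
  assumes "\<gamma> \<in> colours c S"
  obtains u v where "u \<in> S" "v \<in> S" "u \<noteq> v" "\<gamma> = c {u, v}"
  using assms unfolding colours_def edges_on_def by blast

lemma colours_empty_iff: "finite S \<Longrightarrow> colours c S = {} \<longleftrightarrow> card S \<le> 1"
  by (auto simp: colours_def edges_on_def card_le_Suc0_iff_eq)

lemma colours_insert: "colours c (insert x S) = (\<lambda>y. c {x, y}) ` (S - {x}) \<union> colours c S"
  unfolding colours_def edges_on_def by (auto simp: insert_commute)

lemma card_colours_insert_le:
  assumes "finite S" "x \<notin> S"
  shows "card (colours c (insert x S)) \<le> card (colours c S) + card ((\<lambda>y. c {x, y}) ` S - colours c S)"
proof -
  have "colours c (insert x S) = colours c S \<union> ((\<lambda>y. c {x, y}) ` S - colours c S)"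
    using colours_insert[of c x S] assms(2) by auto
  then show ?thesis
    by (metis card_Un_le)
qed

lemma private_colour_ne_edge_colour:
  "\<gamma> \<in> private_colours c S w \<Longrightarrow> p \<in> S - {w} \<Longrightarrow> q \<in> S - {w} \<Longrightarrow> p \<noteq> q \<Longrightarrow> c {p, q} \<noteq> \<gamma>"
  unfolding private_colours_def using edge_colour_in_colours[of p "S - {w}" q c] by auto

lemma private_colour_at:
  assumes "\<gamma> \<in> private_colours c S w"
  obtains u where "u \<in> S" "u \<noteq> w" "\<gamma> = c {w, u}"
proof -
  obtain u v where uv: "u \<in> S" "v \<in> S" "u \<noteq> v" "\<gamma> = c {u, v}"
    using assms unfolding private_colours_def by (blast elim: coloursE)
  then have "w = u \<or> w = v"
    using assms private_colour_ne_edge_colour[OF assms, of u v] by blast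
  then show thesis
    using that uv by (metis insert_commute)
qed

lemma two_private_colours:
  assumes "2 \<le> card (private_colours c S w)"
  obtains a b where "a \<in> S" "b \<in> S" "distinct [w, a, b]" "c {w, a} \<noteq> c {w, b}"
    "c {w, a} \<in> private_colours c S w" "c {w, b} \<in> private_colours c S w"
proof -
  obtain \<alpha> \<beta> where \<alpha>\<beta>: "\<alpha> \<in> private_colours c S w" "\<beta> \<in> private_colours c S w" "\<alpha> \<noteq> \<beta>"
    using assms by (auto simp: card_le_Suc_iff numeral_2_eq_2)
  obtain a where a: "a \<in> S" "a \<noteq> w" "\<alpha> = c {w, a}"
    using private_colour_at[OF \<alpha>\<beta>(1)] .
  obtain b where b: "b \<in> S" "b \<noteq> w" "\<beta> = c {w, b}"
    using private_colour_at[OF \<alpha>\<beta>(2)] .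
  show thesis
    using that a b \<alpha>\<beta> by auto
qed

lemma card_colours_le_delete:
  assumes "finite S"
  shows "card (colours c S) \<le> card (colours c (S - {v})) + card (private_colours c S v)"
proof -
  have "colours c S = colours c (S - {v}) \<union> private_colours c S v"
    unfolding private_colours_def using colours_mono[of "S - {v}" S c] by blast
  then show ?thesis
    by (simp add: card_Un_le)
qed

lemma rainbow_triangle_on_mono: "T \<subseteq> S \<Longrightarrow> rainbow_triangle_on c T \<Longrightarrow> rainbow_triangle_on c S"
  unfolding rainbow_triangle_on_def by (meson subset_trans)

lemma rainbow_C3_P2_on_mono: "T \<subseteq> S \<Longrightarrow> rainbow_C3_P2_on c T \<Longrightarrow> rainbow_C3_P2_on c S"
  unfolding rainbow_C3_P2_on_def by (meson subset_trans)

lemma rainbow_C3_P2_onI: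
  assumes "{a, b, d, x, y} \<subseteq> S" "distinct [a, b, d, x, y]"
    "distinct [c {a, b}, c {b, d}, c {a, d}]" "c {x, y} \<notin> {c {a, b}, c {b, d}, c {a, d}}"
  shows "rainbow_C3_P2_on c S"
proof -
  have "distinct [c {a, b}, c {b, d}, c {a, d}, c {x, y}]"
    using assms(3,4) by auto
  with assms(1,2) show ?thesis
    unfolding rainbow_C3_P2_on_def by (intro exI[of _ a] exI[of _ b] exI[of _ d] exI[of _ x] exI[of _ y] conjI)
qed

lemma edge_colour_mem_rainbow_triangle:
  assumes "\<not> rainbow_C3_P2_on c S" "{a, b, d, x, y} \<subseteq> S" "distinct [a, b, d, x, y]"
    "distinct [c {a, b}, c {b, d}, c {a, d}]"
  shows "c {x, y} \<in> {c {a, b}, c {b, d}, c {a, d}}"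
  using rainbow_C3_P2_onI[OF assms(2-4)] assms(1) by blast

lemma rainbow_C3_P2_on_of_triangle:
  assumes "rainbow_triangle_on c T" "T \<subseteq> S" "x \<in> S - T" "y \<in> S - T" "x \<noteq> y"
    "c {x, y} \<notin> colours c T"
  shows "rainbow_C3_P2_on c S"
proof -
  obtain a b d where abd: "{a, b, d} \<subseteq> T" "distinct [a, b, d]" "distinct [c {a, b}, c {b, d}, c {a, d}]"
    using assms(1) unfolding rainbow_triangle_on_def by blast
  then have "{c {a, b}, c {b, d}, c {a, d}} \<subseteq> colours c T"
    using edge_colour_in_colours[of a T b c] edge_colour_in_colours[of b T d c]
      edge_colour_in_colours[of a T d c] by auto
  then show ?thesis
    using abd assms(2-6) by (intro rainbow_C3_P2_onI[of a b d x y S c]) auto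
qed

lemma rainbow_triangle_at_two_private_colours:
  assumes "v \<in> S" "2 \<le> card (private_colours c S v)"
  shows "rainbow_triangle_on c S"
proof -
  obtain a b where ab: "a \<in> S" "b \<in> S" "distinct [v, a, b]" "c {v, a} \<noteq> c {v, b}"
    "c {v, a} \<in> private_colours c S v" "c {v, b} \<in> private_colours c S v"
    using assms(2) by (rule two_private_colours)
  have "c {a, b} \<noteq> c {v, a}" "c {a, b} \<noteq> c {v, b}"
    using private_colour_ne_edge_colour[OF ab(5), of a b]
      private_colour_ne_edge_colour[OF ab(6), of a b] ab by auto
  with ab assms(1) have "{v, a, b} \<subseteq> S" "distinct [v, a, b]" "distinct [c {v, a}, c {a, b}, c {v, b}]"
    by auto
  then show ?thesis
    unfolding rainbow_triangle_on_def by blast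
qed

lemma rainbow_triangle_if_card_le_card_colours:
  "finite S \<Longrightarrow> S \<noteq> {} \<Longrightarrow> card S \<le> card (colours c S) \<Longrightarrow> rainbow_triangle_on c S"
proof (induction "card S" arbitrary: S rule: less_induct)
  case less
  show ?case
  proof (cases "\<exists>v\<in>S. card (private_colours c S v) \<le> 1")
    case True
    then obtain v where v: "v \<in> S" "card (private_colours c S v) \<le> 1" by blast
    have "card S \<noteq> 1"
    proof
      assume "card S = 1"
      then have "colours c S = {}"
        using colours_empty_iff[OF less.prems(1)] by simp
      then show False
        using less.prems(3) \<open>card S = 1\<close> by simp
    qed
    moreover have "card S \<noteq> 0"
      using less.prems(1,2) by simp
    moreover have "card S \<le> card (colours c (S - {v})) + 1"
      using less.prems(3) v(2) card_colours_le_delete[OF less.prems(1), of c v] by linarith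
    moreover have "card (S - {v}) = card S - 1"
      using v(1) less.prems(1) by simp
    ultimately have "card (S - {v}) < card S" "0 < card (S - {v})"
        "card (S - {v}) \<le> card (colours c (S - {v}))"
      by linarith+
    then have "rainbow_triangle_on c (S - {v})"
      using less.hyps[of "S - {v}"] less.prems(1) by (simp add: card_gt_0_iff)
    then show ?thesis
      by (meson Diff_subset rainbow_triangle_on_mono)
  next
    case False
    obtain v where "v \<in> S"
      using less.prems(2) by blast
    with False have "\<not> card (private_colours c S v) \<le> 1"
      by blast
    then have "2 \<le> card (private_colours c S v)"
      by linarith
    with \<open>v \<in> S\<close> show ?thesis
      by (rule rainbow_triangle_at_two_private_colours)
  qed
qed

lemma private_colour_notin_colours:
  assumes "\<gamma> \<in> private_colours c S v" "T \<subseteq> S - {v}"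
  shows "\<gamma> \<notin> colours c T"
  using assms(1) colours_mono[OF assms(2), of c] unfolding private_colours_def by blast

lemma card_colours_less_if_disjoint_new_edge:
  assumes "\<not> rainbow_C3_P2_on c S" "finite T" "T \<noteq> {}" "T \<subseteq> S"
    "x \<in> S - T" "y \<in> S - T" "x \<noteq> y" "c {x, y} \<notin> colours c T"
  shows "card (colours c T) < card T"
proof (rule ccontr)
  assume "\<not> card (colours c T) < card T"
  then have "rainbow_triangle_on c T"
    using rainbow_triangle_if_card_le_card_colours[OF assms(2,3), of c] by linarith
  then have "rainbow_C3_P2_on c S"
    using assms(4-8) by (rule rainbow_C3_P2_on_of_triangle)
  with assms(1) show False
    by blast
qed

lemma rainbow_C3_P2_of_private_triangle:
  assumes "{x, v, u, z, y} \<subseteq> S" "distinct [x, v, u, z, y]"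
    "c {x, v} \<in> private_colours c S x" "c {x, u} \<in> private_colours c S x" "c {x, v} \<noteq> c {x, u}"
    "c {v, u} \<in> private_colours c S v"
  shows "rainbow_C3_P2_on c S"
proof -
  have "c {v, u} \<noteq> c {x, v}" "c {v, u} \<noteq> c {x, u}"
    using private_colour_ne_edge_colour[OF assms(3), of v u]
      private_colour_ne_edge_colour[OF assms(4), of v u] assms(1,2) by auto
  moreover have "c {z, y} \<noteq> c {x, v}" "c {z, y} \<noteq> c {x, u}" "c {z, y} \<noteq> c {v, u}"
    using private_colour_ne_edge_colour[OF assms(3), of z y]
      private_colour_ne_edge_colour[OF assms(4), of z y]
      private_colour_ne_edge_colour[OF assms(6), of z y] assms(1,2) by auto
  ultimately show ?thesis
    using assms(1,2,5) by (intro rainbow_C3_P2_onI[of x v u z y S c]) auto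
qed

lemma rainbow_C3_P2_of_private_path:
  assumes "{x, a, y, v, b} \<subseteq> S" "distinct [x, a, y, v, b]"
    "c {x, a} \<in> private_colours c S x" "c {a, y} \<in> private_colours c S y"
    "c {v, b} \<in> private_colours c S v" "c {x, y} = c {a, b}"
  shows "rainbow_C3_P2_on c S"
proof -
  have "c {a, y} \<noteq> c {x, a}" "c {a, b} \<noteq> c {x, a}" "c {v, b} \<noteq> c {x, a}"
    using private_colour_ne_edge_colour[OF assms(3), of a y]
      private_colour_ne_edge_colour[OF assms(3), of a b]
      private_colour_ne_edge_colour[OF assms(3), of v b] assms(1,2) by auto
  moreover have "c {a, b} \<noteq> c {a, y}" "c {v, b} \<noteq> c {a, y}"
    using private_colour_ne_edge_colour[OF assms(4), of a b]
      private_colour_ne_edge_colour[OF assms(4), of v b] assms(1,2) by auto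
  moreover have "c {a, b} \<noteq> c {v, b}"
    using private_colour_ne_edge_colour[OF assms(5), of a b] assms(1,2) by auto
  ultimately show ?thesis
    using assms(1,2) by (intro rainbow_C3_P2_onI[of x a y v b S c]) (auto simp: assms(6))
qed

lemma private_colour_towards_private_pair:
  assumes nrb: "\<not> rainbow_C3_P2_on c S"
    and S: "{v, a, b, z, w} \<subseteq> S" "distinct [v, a, b, z, w]"
    and v: "c {v, a} \<in> private_colours c S v" "c {v, b} \<in> private_colours c S v"
    and z: "2 \<le> card (private_colours c S z)"
    and rest: "\<And>r. r \<in> S - {v, a, b, z} \<Longrightarrow> c {z, r} = c {a, b}"
  shows "c {z, a} \<in> private_colours c S z"
proof -
  \<comment> \<open>The two private colours of z sit neither on edges towards the rest (coloured c {a, b})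
    nor on z v (which would give a rainbow triangle z v a or z v b), hence on z a and z b.\<close>
  obtain p q where pq: "p \<in> S" "q \<in> S" "distinct [z, p, q]" "c {z, p} \<noteq> c {z, q}"
    "c {z, p} \<in> private_colours c S z" "c {z, q} \<in> private_colours c S z"
    using two_private_colours[OF z] .
  have ab_not_private: "c {a, b} \<notin> private_colours c S z"
    using private_colour_ne_edge_colour[of "c {a, b}" c S z a b] S by auto
  have in_vab: "r \<in> {v, a, b}" if "r \<in> S" "r \<noteq> z" "c {z, r} \<in> private_colours c S z" for r
  proof (rule ccontr)
    assume "r \<notin> {v, a, b}"
    then have "c {z, r} = c {a, b}"
      using rest[of r] that(1,2) by simp
    then show False
      using that(3) ab_not_private by simp
  qed
  have not_v: False
    if "c {z, v} \<in> private_colours c S z" "c {z, u} \<in> private_colours c S z" "c {z, v} \<noteq> c {z, u}"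
      "u \<in> {a, b}" for u
  proof -
    have "rainbow_C3_P2_on c S"
    proof (cases "u = a")
      case True
      then show ?thesis
        using that S v by (intro rainbow_C3_P2_of_private_triangle[of z v a w b S c]) auto
    next
      case False
      then show ?thesis
        using that S v by (intro rainbow_C3_P2_of_private_triangle[of z v b w a S c]) auto
    qed
    then show False
      using nrb by blast
  qed
  have "p \<in> {a, b}" "q \<in> {a, b}"
    using in_vab[of p] in_vab[of q] not_v[of q] not_v[of p] pq by (auto simp: insert_commute)
  then show ?thesis
    using pq by auto
qed

lemma rainbow_C3_P2_if_two_private_colours_everywhere:
  assumes "finite S" "5 \<le> card S" "\<forall>v\<in>S. 2 \<le> card (private_colours c S v)"
  shows "rainbow_C3_P2_on c S"
proof (rule ccontr)
  assume nrb: "\<not> rainbow_C3_P2_on c S"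
  have "S \<noteq> {}"
    using assms(2) by auto
  then obtain v where v: "v \<in> S"
    by blast
  obtain a b where ab: "a \<in> S" "b \<in> S" "distinct [v, a, b]" "c {v, a} \<noteq> c {v, b}"
    "c {v, a} \<in> private_colours c S v" "c {v, b} \<in> private_colours c S v"
    using assms(3) v by (blast intro: two_private_colours)
  define R where "R = S - {v, a, b}"
  have "card R = card S - 3"
    unfolding R_def using assms(1) ab v by (simp add: card_Diff_subset)
  then have "2 \<le> card R"
    using assms(2) by linarith
  then obtain x y where xy: "x \<in> R" "y \<in> R" "x \<noteq> y"
    by (auto simp: card_le_Suc_iff numeral_2_eq_2)
  have ab_edge: "c {a, b} \<noteq> c {v, a}" "c {a, b} \<noteq> c {v, b}"
    using private_colour_ne_edge_colour[OF ab(5), of a b]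
      private_colour_ne_edge_colour[OF ab(6), of a b] ab by auto
  have R_colour: "c {p, q} = c {a, b}" if "p \<in> R" "q \<in> R" "p \<noteq> q" for p q
  proof -
    have "c {p, q} \<in> {c {v, a}, c {a, b}, c {v, b}}"
      using edge_colour_mem_rainbow_triangle[OF nrb, of v a b p q] that ab ab_edge v
      unfolding R_def by auto
    moreover have "c {p, q} \<noteq> c {v, a}" "c {p, q} \<noteq> c {v, b}"
      using private_colour_ne_edge_colour[OF ab(5), of p q]
        private_colour_ne_edge_colour[OF ab(6), of p q] that unfolding R_def by auto
    ultimately show ?thesis
      by blast
  qed
  have towards_a: "c {z, a} \<in> private_colours c S z" if "z \<in> R" "w \<in> R" "z \<noteq> w" for z w
    using that ab v assms(3) R_colour[of z]
    by (intro private_colour_towards_private_pair[OF nrb, of v a b z w]) (auto simp: R_def)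
  have "c {a, y} \<in> private_colours c S y"
    using towards_a[of y x] xy by (simp add: insert_commute)
  then have "rainbow_C3_P2_on c S"
    using towards_a[of x y] R_colour[of x y] xy ab v
    by (intro rainbow_C3_P2_of_private_path[of x a y v b S c]) (auto simp: R_def)
  with nrb show False
    by blast
qed

lemma vertex_with_few_private_colours:
  assumes "finite S" "5 \<le> card S" "\<not> rainbow_C3_P2_on c S"
  obtains v where "v \<in> S" "card (private_colours c S v) \<le> 1"
proof -
  obtain v where v: "v \<in> S" "\<not> 2 \<le> card (private_colours c S v)"
    using rainbow_C3_P2_if_two_private_colours_everywhere[OF assms(1,2)] assms(3) by auto
  from v(2) have "card (private_colours c S v) \<le> 1"
    by linarith
  with v(1) show thesis
    by (rule that)
qed

lemma rainbow_C3_P2_five_vertices: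
  assumes "finite S" "card S = 5" "7 \<le> card (colours c S)"
  shows "rainbow_C3_P2_on c S"
proof (rule ccontr)
  assume nrb: "\<not> rainbow_C3_P2_on c S"
  have "5 \<le> card S"
    using assms(2) by simp
  then obtain v where v: "v \<in> S" "card (private_colours c S v) \<le> 1"
    using vertex_with_few_private_colours[OF assms(1) _ nrb] by blast
  define Q where "Q = S - {v}"
  have Q: "finite Q" "card Q = 4" "card (edges_on Q) = 6"
    unfolding Q_def using assms(1,2) v(1) by (simp_all add: card_edges_on numeral_eq_Suc)
  have "card (colours c Q) \<le> 6"
    using card_colours_le_card_edges[OF Q(1), of c] Q(2) by (simp add: numeral_eq_Suc)
  moreover have "card (colours c S) \<le> card (colours c Q) + card (private_colours c S v)"
    unfolding Q_def by (rule card_colours_le_delete[OF assms(1)])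
  ultimately have "card (colours c Q) = card (edges_on Q)" "card (private_colours c S v) \<noteq> 0"
    using assms(3) v(2) Q(3) by linarith+
  from this(1) have inj: "inj_on c (edges_on Q)"
    unfolding colours_def by (rule eq_card_imp_inj_on[OF finite_edges_on[OF Q(1)]])
  obtain \<rho> where \<rho>: "\<rho> \<in> private_colours c S v"
    using \<open>card (private_colours c S v) \<noteq> 0\<close> by (metis card.empty ex_in_conv)
  then obtain u where u: "u \<in> S" "u \<noteq> v" "\<rho> = c {v, u}"
    by (rule private_colour_at)
  define T where "T = Q - {u}"
  have "u \<in> Q"
    unfolding Q_def using u by simp
  then have T: "finite T" "card T = 3" "T \<subseteq> S - {v}" "T \<subseteq> Q"
    unfolding T_def using Q(1,2) by (auto simp: Q_def)
  have "card (colours c T) = card (edges_on T)"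
    unfolding colours_def using inj_on_subset[OF inj edges_on_mono[OF T(4)]] by (rule card_image)
  then have "card (colours c T) = card T"
    using card_edges_on[OF T(1)] T(2) by (simp add: numeral_eq_Suc)
  moreover have "card (colours c T) < card T"
  proof (rule card_colours_less_if_disjoint_new_edge[OF nrb T(1)])
    show "T \<noteq> {}"
      using T(2) by auto
    show "c {v, u} \<notin> colours c T"
      using private_colour_notin_colours[OF \<rho> T(3)] u(3) by simp
  qed (use T(3) u(1,2) v(1) in \<open>auto simp: T_def\<close>)
  ultimately show False
    by simp
qed

lemma opposite_edge_colours:
  assumes nrb: "\<not> rainbow_C3_P2_on c S"
    and S: "{v, x, i, j, k, l} \<subseteq> S" "distinct [v, x, i, j, k, l]"
    and Q: "{i, j, k, l} \<subseteq> Q" "c {x, i} \<noteq> c {x, j}" "c {x, i} \<notin> colours c Q" "c {x, j} \<notin> colours c Q"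
  shows "c {k, l} = c {i, j}" "c {v, l} \<in> {c {x, i}, c {i, j}, c {x, j}}"
proof -
  have ij: "c {i, j} \<in> colours c Q" and kl: "c {k, l} \<in> colours c Q"
    using edge_colour_in_colours[of i Q j c] edge_colour_in_colours[of k Q l c] Q(1) S(2) by auto
  then have tri: "distinct [c {x, i}, c {i, j}, c {x, j}]"
    using Q(2-4) by auto
  have "c {k, l} \<in> {c {x, i}, c {i, j}, c {x, j}}"
    using edge_colour_mem_rainbow_triangle[OF nrb _ _ tri, of k l] S by auto
  then show "c {k, l} = c {i, j}"
    using kl Q(3,4) by auto
  show "c {v, l} \<in> {c {x, i}, c {i, j}, c {x, j}}"
    using edge_colour_mem_rainbow_triangle[OF nrb _ _ tri, of v l] S by auto
qed

text \<open>
  Each triangle x i j on two new colours forces the edge of the K4 opposite to i j to have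
  colour c {i, j}, and the edge v i4 to carry one of the three triangle colours; intersecting
  these constraints for the three pairs among i1, i2, i3 leaves a single colour for the K4.
\<close>

lemma card_colours_K4_le_1:
  assumes nrb: "\<not> rainbow_C3_P2_on c S"
    and S: "{v, x, i1, i2, i3, i4} \<subseteq> S" "distinct [v, x, i1, i2, i3, i4]"
    and new: "distinct [c {x, i1}, c {x, i2}, c {x, i3}]"
      "c {x, i1} \<notin> colours c {i1, i2, i3, i4}" "c {x, i2} \<notin> colours c {i1, i2, i3, i4}"
      "c {x, i3} \<notin> colours c {i1, i2, i3, i4}"
  shows "card (colours c {i1, i2, i3, i4}) \<le> 1"
proof -
  define Q where "Q = {i1, i2, i3, i4}"
  note opposite = opposite_edge_colours[OF nrb]
  have o12: "c {i3, i4} = c {i1, i2}" "c {v, i4} \<in> {c {x, i1}, c {i1, i2}, c {x, i2}}"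
    using opposite[of v x i1 i2 i3 i4 Q] S new by (auto simp: Q_def)
  have o13: "c {i2, i4} = c {i1, i3}" "c {v, i4} \<in> {c {x, i1}, c {i1, i3}, c {x, i3}}"
    using opposite[of v x i1 i3 i2 i4 Q] S new by (auto simp: Q_def)
  have o23: "c {i1, i4} = c {i2, i3}" "c {v, i4} \<in> {c {x, i2}, c {i2, i3}, c {x, i3}}"
    using opposite[of v x i2 i3 i1 i4 Q] S new by (auto simp: Q_def)
  have "c {i1, i2} \<in> colours c Q" "c {i1, i3} \<in> colours c Q" "c {i2, i3} \<in> colours c Q"
    using S(2) by (auto simp: Q_def intro: edge_colour_in_colours)
  then have "c {i1, i3} = c {i1, i2}" "c {i2, i3} = c {i1, i2}"
    using o12(2) o13(2) o23(2) new[folded Q_def] by auto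
  then have "c {p, q} = c {i1, i2}" if "p \<in> Q" "q \<in> Q" "p \<noteq> q" for p q
    using that o12(1) o13(1) o23(1) unfolding Q_def by (auto simp: insert_commute)
  then have "colours c Q \<subseteq> {c {i1, i2}}"
    by (auto elim: coloursE)
  then show ?thesis
    unfolding Q_def using card_mono[of "{c {i1, i2}}"] by fastforce
qed

lemma card_colours_K4_le_1_if_three_new_colours:
  assumes nrb: "\<not> rainbow_C3_P2_on c S"
    and Q: "finite Q" "card Q = 4" "insert v (insert x Q) \<subseteq> S" "v \<notin> Q" "x \<notin> Q" "v \<noteq> x"
    and new: "3 \<le> card ((\<lambda>i. c {x, i}) ` Q - colours c Q)"
  shows "card (colours c Q) \<le> 1"
proof -
  obtain N where N: "N \<subseteq> (\<lambda>i. c {x, i}) ` Q - colours c Q" "card N = 3" "finite N"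
    using new by (rule obtain_subset_with_card_n)
  have "\<exists>\<alpha>1 \<alpha>2 \<alpha>3. N = {\<alpha>1, \<alpha>2, \<alpha>3} \<and> \<alpha>1 \<noteq> \<alpha>2 \<and> \<alpha>2 \<noteq> \<alpha>3 \<and> \<alpha>1 \<noteq> \<alpha>3"
    using N(2) by (simp add: card_3_iff)
  then obtain \<alpha>1 \<alpha>2 \<alpha>3 where \<alpha>: "N = {\<alpha>1, \<alpha>2, \<alpha>3}" "distinct [\<alpha>1, \<alpha>2, \<alpha>3]"
    by auto
  have from_Q: "\<exists>i\<in>Q. \<alpha> = c {x, i}" and not_old: "\<alpha> \<notin> colours c Q" if "\<alpha> \<in> N" for \<alpha>
    using N(1) that by blast+
  obtain i1 where i1: "i1 \<in> Q" "\<alpha>1 = c {x, i1}"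
    using from_Q[of \<alpha>1] \<alpha>(1) by auto
  obtain i2 where i2: "i2 \<in> Q" "\<alpha>2 = c {x, i2}"
    using from_Q[of \<alpha>2] \<alpha>(1) by auto
  obtain i3 where i3: "i3 \<in> Q" "\<alpha>3 = c {x, i3}"
    using from_Q[of \<alpha>3] \<alpha>(1) by auto
  have i_new: "c {x, i1} \<notin> colours c Q" "c {x, i2} \<notin> colours c Q" "c {x, i3} \<notin> colours c Q"
    using not_old[of \<alpha>1] not_old[of \<alpha>2] not_old[of \<alpha>3] \<alpha>(1) i1 i2 i3 by simp_all
  have "distinct [i1, i2, i3]"
    using \<alpha>(2) i1 i2 i3 by auto
  then have "card {i1, i2, i3} = 3"
    by simp
  then have "card (Q - {i1, i2, i3}) = 1"
    using card_Diff_subset[of "{i1, i2, i3}" Q] Q(2) i1 i2 i3 by simp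
  then obtain i4 where "Q - {i1, i2, i3} = {i4}"
    by (rule card_1_singletonE)
  then have Q_eq: "Q = {i1, i2, i3, i4}" and "distinct [i1, i2, i3, i4]"
    using i1 i2 i3 \<open>distinct [i1, i2, i3]\<close> by auto
  have "{v, x, i1, i2, i3, i4} \<subseteq> S" "distinct [v, x, i1, i2, i3, i4]"
    using Q(3-6) \<open>distinct [i1, i2, i3, i4]\<close> unfolding Q_eq by auto
  moreover have "distinct [c {x, i1}, c {x, i2}, c {x, i3}]"
    using \<alpha>(2) i1 i2 i3 by simp
  ultimately show ?thesis
    using card_colours_K4_le_1[OF nrb, of v x i1 i2 i3 i4] i_new unfolding Q_eq by blast
qed

lemma rainbow_C3_P2_six_vertices:
  assumes "finite S" "card S = 6" "7 \<le> card (colours c S)"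
  shows "rainbow_C3_P2_on c S"
proof (rule ccontr)
  assume nrb: "\<not> rainbow_C3_P2_on c S"
  have "5 \<le> card S"
    using assms(2) by simp
  then obtain v where v: "v \<in> S" "card (private_colours c S v) \<le> 1"
    using vertex_with_few_private_colours[OF assms(1) _ nrb] by blast
  define W where "W = S - {v}"
  have W: "finite W" "card W = 5" "W \<subseteq> S"
    unfolding W_def using assms(1,2) v(1) by auto
  have split: "card (colours c S) \<le> card (colours c W) + card (private_colours c S v)"
    unfolding W_def by (rule card_colours_le_delete[OF assms(1)])
  have "private_colours c S v \<noteq> {}"
  proof
    assume "private_colours c S v = {}"
    then have "7 \<le> card (colours c W)"
      using split assms(3) by simp
    then have "rainbow_C3_P2_on c W"
      by (rule rainbow_C3_P2_five_vertices[OF W(1,2)])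
    with nrb W(3) show False
      using rainbow_C3_P2_on_mono by blast
  qed
  then obtain \<rho> where "\<rho> \<in> private_colours c S v"
    by blast
  then obtain x where x: "x \<in> S" "x \<noteq> v" "c {v, x} \<in> private_colours c S v"
    by (metis private_colour_at)
  define Q where "Q = W - {x}"
  have Q: "finite Q" "card Q = 4" "Q \<subseteq> S - {v}" "insert v (insert x Q) \<subseteq> S" "v \<notin> Q" "x \<notin> Q"
    unfolding Q_def W_def using assms(1,2) v(1) x(1,2) by auto
  have W_eq: "W = insert x Q"
    unfolding Q_def W_def using x(1,2) by auto
  have "card (colours c Q) < card Q"
    using card_colours_less_if_disjoint_new_edge[OF nrb Q(1) _ _ _ _ x(2)[symmetric]]
      private_colour_notin_colours[OF x(3) Q(3)] Q v(1) x(1) by force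
  moreover have "card (colours c W) \<le> card (colours c Q) + card ((\<lambda>i. c {x, i}) ` Q - colours c Q)"
    unfolding W_eq using card_colours_insert_le[OF Q(1,6)] .
  moreover have "6 \<le> card (colours c W)"
    using split v(2) assms(3) by linarith
  ultimately have "card (colours c Q) \<le> 1"
    using card_colours_K4_le_1_if_three_new_colours[OF nrb Q(1,2,4,5,6) x(2)[symmetric]] Q(2) by linarith
  moreover have "card ((\<lambda>i. c {x, i}) ` Q - colours c Q) \<le> 4"
    using card_image_le[OF Q(1), of "\<lambda>i. c {x, i}"] card_Diff_subset Q(2)
    by (metis Diff_subset card_mono finite_imageI Q(1) order_trans)
  ultimately show False
    using \<open>card (colours c W) \<le> _\<close> \<open>6 \<le> card (colours c W)\<close> by linarith
qed

lemma rainbow_C3_P2_if_card_colours_gt: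
  assumes "finite S" "6 \<le> card S" "card S < card (colours c S)"
  shows "rainbow_C3_P2_on c S"
  using assms
proof (induction "card S" arbitrary: S rule: less_induct)
  case less
  show ?case
  proof (cases "card S = 6")
    case True
    with less.prems(3) have "7 \<le> card (colours c S)"
      by simp
    then show ?thesis
      using rainbow_C3_P2_six_vertices[OF less.prems(1) True] by blast
  next
    case False
    show ?thesis
    proof (rule ccontr)
      assume nrb: "\<not> rainbow_C3_P2_on c S"
      have "5 \<le> card S"
        using less.prems(2) by simp
      then obtain v where v: "v \<in> S" "card (private_colours c S v) \<le> 1"
        using vertex_with_few_private_colours[OF less.prems(1) _ nrb] by blast
      have "card (colours c S) \<le> card (colours c (S - {v})) + card (private_colours c S v)"
        by (rule card_colours_le_delete[OF less.prems(1)])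
      moreover have "card (S - {v}) = card S - 1"
        using v(1) less.prems(1) by simp
      ultimately have "card (S - {v}) < card S" "6 \<le> card (S - {v})"
        "card (S - {v}) < card (colours c (S - {v}))"
        using less.prems(2,3) v(2) False by linarith+
      then have "rainbow_C3_P2_on c (S - {v})"
        using less.hyps less.prems(1) by (meson finite_Diff)
      with nrb show False
        by (meson Diff_subset rainbow_C3_P2_on_mono)
    qed
  qed
qed

lemma Kn_edges_eq_edges_on: "Kn_edges n = edges_on {0..<n}"
  unfolding Kn_edges_def edges_on_def by simp

lemma has_rainbow_C3_P2_iff: "has_rainbow_C3_P2 n c \<longleftrightarrow> rainbow_C3_P2_on c {0..<n}"
proof -
  have "(a < n \<and> b < n \<and> d < n \<and> x < n \<and> y < n \<and> distinct [a, b, d, x, y] \<and>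
      card (c ` {{a, b}, {b, d}, {a, d}, {x, y}}) = 4) \<longleftrightarrow>
    ({a, b, d, x, y} \<subseteq> {0..<n} \<and> distinct [a, b, d, x, y] \<and>
      distinct [c {a, b}, c {b, d}, c {a, d}, c {x, y}])" for a b d x y
  proof -
    let ?cs = "[c {a, b}, c {b, d}, c {a, d}, c {x, y}]"
    have "c ` {{a, b}, {b, d}, {a, d}, {x, y}} = set ?cs" "length ?cs = 4"
      by simp_all
    then have "card (c ` {{a, b}, {b, d}, {a, d}, {x, y}}) = 4 \<longleftrightarrow> distinct ?cs"
      using distinct_card[of ?cs] card_distinct[of ?cs] by argo
    moreover have "{a, b, d, x, y} \<subseteq> {0..<n} \<longleftrightarrow> a < n \<and> b < n \<and> d < n \<and> x < n \<and> y < n"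
      by simp
    ultimately show ?thesis
      by argo
  qed
  then show ?thesis
    unfolding has_rainbow_C3_P2_def rainbow_C3_P2_on_def by (simp only:)
qed

lemma card_colours_le_if_no_rainbow_C3_P2:
  assumes "5 \<le> n" "\<not> has_rainbow_C3_P2 n c"
  shows "card (c ` Kn_edges n) \<le> max n 6"
proof (rule ccontr)
  assume "\<not> card (c ` Kn_edges n) \<le> max n 6"
  then have many: "max n 6 < card (colours c {0..<n})"
    unfolding colours_def Kn_edges_eq_edges_on by linarith
  have "rainbow_C3_P2_on c {0..<n}"
  proof (cases "n = 5")
    case True
    then show ?thesis
      using rainbow_C3_P2_five_vertices[of "{0..<n}" c] many by simp
  next
    case False
    then show ?thesis
      using rainbow_C3_P2_if_card_colours_gt[of "{0..<n}" c] many assms(1) by simp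
  qed
  with assms(2) show False
    by (simp add: has_rainbow_C3_P2_iff)
qed

definition star_colouring :: "nat set \<Rightarrow> nat" where
  "star_colouring e = (if 0 \<in> e then Max e else 0)"

lemma star_colouring_edge: "star_colouring {u, v} = (if u = 0 then v else if v = 0 then u else 0)"
  by (auto simp: star_colouring_def max_def)

lemma star_colouring_not_rainbow: "\<not> rainbow_C3_P2_on star_colouring S"
proof
  assume "rainbow_C3_P2_on star_colouring S"
  then obtain a b d x y where "distinct [a, b, d, x, y]"
    "distinct [star_colouring {a, b}, star_colouring {b, d}, star_colouring {a, d}, star_colouring {x, y}]"
    unfolding rainbow_C3_P2_on_def by blast
  then show False
    by (auto simp: star_colouring_edge split: if_splits)
qed

lemma star_colouring_colours:
  assumes "3 \<le> n"
  shows "star_colouring ` Kn_edges n = {0..<n}"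
proof
  show "star_colouring ` Kn_edges n \<subseteq> {0..<n}"
    using assms by (auto simp: Kn_edges_def star_colouring_edge)
  show "{0..<n} \<subseteq> star_colouring ` Kn_edges n"
  proof
    fix k assume k: "k \<in> {0..<n}"
    have "star_colouring {if k = 0 then 1 else 0, if k = 0 then 2 else k} = k"
      by (simp add: star_colouring_edge)
    moreover have "{if k = 0 then 1 else 0, if k = 0 then 2 else k} \<in> Kn_edges n"
      using k assms unfolding Kn_edges_def by force
    ultimately show "k \<in> star_colouring ` Kn_edges n"
      by (metis image_eqI)
  qed
qed

text \<open>
  Vertex 4 is joined to each i < 4 in colour i; inside the K4 on {0..3} the perfect matching
  {0,3}, {1,2} has colour 4 and the complementary 4-cycle colour 5. Thus opposite edges of the
  K4 share a colour and every triangle inside it uses only two colours.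
\<close>

definition K5_colouring :: "nat set \<Rightarrow> nat" where
  "K5_colouring e = (if 4 \<in> e then Min e else if e = {0, 3} \<or> e = {1, 2} then 4 else 5)"

lemma K5_colouring_K4_edge:
  "p < 4 \<Longrightarrow> q < 4 \<Longrightarrow> p \<noteq> q \<Longrightarrow> K5_colouring {p, q} = (if p + q = 3 then 4 else 5)"
  by (auto simp: K5_colouring_def doubleton_eq_iff)

lemma K5_colouring_opposite_edges:
  assumes "{p, q, r, s} \<subseteq> {0..<4}" "distinct [p, q, r, s]"
  shows "K5_colouring {p, q} = K5_colouring {r, s}"
proof -
  have "{p, q, r, s} = {0..<4}"
    using assms by (intro card_subset_eq) auto
  then have "p + q + r + s = 6"
    using assms(2) sum.insert[of "{q, r, s}" p id] by (simp add: atLeast0_lessThan_Suc numeral_eq_Suc)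
  then show ?thesis
    using assms by (simp add: K5_colouring_K4_edge)
qed

lemma K5_colouring_K4_triangle:
  assumes "{p, q, r} \<subseteq> {0..<4}" "distinct [p, q, r]"
  shows "\<not> distinct [K5_colouring {p, q}, K5_colouring {q, r}, K5_colouring {p, r}]"
  using assms by (simp add: K5_colouring_K4_edge)

lemma K5_colouring_not_rainbow: "\<not> rainbow_C3_P2_on K5_colouring {0..<5}"
proof
  assume "rainbow_C3_P2_on K5_colouring {0..<5}"
  then obtain a b d x y where V: "{a, b, d, x, y} \<subseteq> {0..<5}" "distinct [a, b, d, x, y]"
    and C: "distinct [K5_colouring {a, b}, K5_colouring {b, d}, K5_colouring {a, d}, K5_colouring {x, y}]"
    unfolding rainbow_C3_P2_on_def by blast
  have "{a, b, d, x, y} = {0..<5}"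
    using V by (intro card_subset_eq) auto
  then have "4 \<in> {a, b, d, x, y}"
    by auto
  moreover have K4: "z \<in> {0..<4}" if "z \<in> {a, b, d, x, y}" "z \<noteq> 4" for z
  proof -
    have "z < 5"
      using V(1) that(1) by auto
    with that(2) show ?thesis
      by simp
  qed
  ultimately consider "a = 4" | "b = 4" | "d = 4" | "x = 4 \<or> y = 4"
    by blast
  then show False
  proof cases
    case 1
    then have "{b, d, x, y} \<subseteq> {0..<4}"
      using K4[of b] K4[of d] K4[of x] K4[of y] V(2) by auto
    then show False
      using K5_colouring_opposite_edges[of b d x y] C V(2) by simp
  next
    case 2
    then have "{a, d, x, y} \<subseteq> {0..<4}"
      using K4[of a] K4[of d] K4[of x] K4[of y] V(2) by auto
    then show False
      using K5_colouring_opposite_edges[of a d x y] C V(2) by simp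
  next
    case 3
    then have "{a, b, x, y} \<subseteq> {0..<4}"
      using K4[of a] K4[of b] K4[of x] K4[of y] V(2) by auto
    then show False
      using K5_colouring_opposite_edges[of a b x y] C V(2) by simp
  next
    case 4
    then have "{a, b, d} \<subseteq> {0..<4}"
      using K4[of a] K4[of b] K4[of d] V(2) by auto
    then show False
      using K5_colouring_K4_triangle[of a b d] C V(2) by simp
  qed
qed

lemma K5_colouring_colours: "K5_colouring ` Kn_edges 5 = {0..<6}"
proof
  have "K5_colouring {u, v} < 6" if "u < 5" "v < 5" for u v
    using that by (simp add: K5_colouring_def min_def)
  then show "K5_colouring ` Kn_edges 5 \<subseteq> {0..<6}"
    unfolding Kn_edges_def by auto
  have edge: "{u, v} \<in> Kn_edges 5" if "u < 5" "v < 5" "u \<noteq> v" for u v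
    unfolding Kn_edges_def using that by blast
  show "{0..<6} \<subseteq> K5_colouring ` Kn_edges 5"
  proof
    fix k :: nat
    assume "k \<in> {0..<6}"
    then consider "k < 4" | "k = 4" | "k = 5"
      by force
    then show "k \<in> K5_colouring ` Kn_edges 5"
    proof cases
      case 1
      then show ?thesis
        using edge[of k 4] by (intro image_eqI[of k K5_colouring "{k, 4}"]) (simp_all add: K5_colouring_def)
    next
      case 2
      then show ?thesis
        using edge[of 0 3] by (intro image_eqI[of k K5_colouring "{0, 3}"]) (simp_all add: K5_colouring_def)
    next
      case 3
      then show ?thesis
        using edge[of 0 1] by (intro image_eqI[of k K5_colouring "{0, 1}"]) (simp_all add: K5_colouring_def doubleton_eq_iff)
    qed
  qed
qed

lemma ar_C3_P2_eq:
  assumes "5 \<le> n"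
  shows "ar_C3_P2 n = max n 6"
  unfolding ar_C3_P2_def
proof (rule Greatest_equality)
  show "\<exists>c :: nat set \<Rightarrow> nat. card (c ` Kn_edges n) = max n 6 \<and> \<not> has_rainbow_C3_P2 n c"
  proof (cases "n = 5")
    case True
    then show ?thesis
      using K5_colouring_colours K5_colouring_not_rainbow
      by (intro exI[of _ K5_colouring]) (simp add: has_rainbow_C3_P2_iff)
  next
    case False
    then show ?thesis
      using assms star_colouring_colours[of n] star_colouring_not_rainbow[of "{0..<n}"]
      by (intro exI[of _ star_colouring]) (simp add: has_rainbow_C3_P2_iff)
  qed
next
  fix k
  assume "\<exists>c :: nat set \<Rightarrow> nat. card (c ` Kn_edges n) = k \<and> \<not> has_rainbow_C3_P2 n c"
  then show "k \<le> max n 6"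
    using card_colours_le_if_no_rainbow_C3_P2[OF assms] by blast
qed

theorem proposition6p2:
  fixes n :: nat
  assumes "n \<ge> 5"
  shows "AR_C3_P2 n = max (n + 1) 7"
  using ar_C3_P2_eq[OF assms] unfolding AR_C3_P2_def by simp

end
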